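(* Let $\mathcal M=\langle Q,R,f,\mathcal I\rangle$ be a monotonic automaton with $Q\cap R=\varnothing$, and let $\langle q_0,S_0\rangle$ be a configuration. Treat elements of $Q\cup R$ as propositional variables and let $\Gamma$ be the set of implicational formulas consisting of: all atoms in $S_0\cup\{f\}$; for each instruction $q:\ \mathsf{check}\ \{s^1_1,\ldots,s^k_1\};\ \mathsf{set}\ \{s^1_2,\ldots,s^\ell_2\};\ \mathsf{jmp}\ p$ the formula $s^1_1\to\cdots\to s^k_1\to(s^1_2\to\cdots\to s^\ell_2\to p)\to q$; and for each instruction $q:\ \mathsf{jmp}\ p_1\ \mathsf{and}\ p_2$ the formula $p_1\to p_2\to q$. Then $\langle q_0,S_0\rangle$ is accepting if and only if $\Gamma\vdash q_0$ in intuitionistic implicational logic. Moreover every formula in $\Gamma$ has order at most two, so $\Gamma\to q_0$ has order at most three.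
   Context: A monotonic automaton is $\mathcal M=\langle Q,R,f,\mathcal I\rangle$ where $Q$ is a finite set of states with final state $f\in Q$, $R$ is a finite set of registers, and $\mathcal I$ is a finite set of instructions, each of the form (1) $q:\ \mathsf{check}\ S_1;\ \mathsf{set}\ S_2;\ \mathsf{jmp}\ p$, or (2) $q:\ \mathsf{jmp}\ p_1\ \mathsf{and}\ p_2$, with $q,p,p_1,p_2\in Q$ and $S_1,S_2\subseteq R$. A configuration is a pair $\langle q,S\rangle$ with $q\in Q$, $S\subseteq R$. An instruction of type (1) at state $q$ leads from $\langle q,S\rangle$ to $\langle p,S\cup S_2\rangle$ provided $S_1\subseteq S$; an instruction of type (2) at $q$ leads from $\langle q,S\rangle$ to both $\langle p_1,S\rangle$ and $\langle p_2,S\rangle$. The set of accepting configurations is the least set such that: $\langle f,S\rangle$ is accepting; $\langle q,S\rangle$ is accepting if some type (1) instruction at $q$ applies and leads to an accepting configuration; $\langle q,S\rangle$ is accepting if some type (2) instruction at $q$ leads to two configurations $\langle p_1,S\rangle,\langle p_2,S\rangle$ that are both accepting. Intuitionistic implicational logic (IIPC) has formulas built from propositional variables by $\to$ only (right-associative), with provability given by natural deduction (simply typed lambda calculus). For a finite set $\Gamma=\{\varphi_1,\ldots,\varphi_n\}$, $\Gamma\to p$ denotes $\varphi_1\to\cdots\to\varphi_n\to p$. Order: an atom has order $0$, and $r(\sigma\to\tau)=\max(r(\tau),r(\sigma)+1)$. *)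

theory Defs
  imports Main
begin

datatype 'a instr =
    Check 'a "'a set" "'a set" 'a   (* q: check S1; set S2; jmp p *)
  | Fork 'a 'a 'a                   (* q: jmp p1 and p2 *)

definition monotonic_automaton :: "'a set \<Rightarrow> 'a set \<Rightarrow> 'a \<Rightarrow> 'a instr set \<Rightarrow> bool" where
  "monotonic_automaton Q R f I \<longleftrightarrow>
     finite Q \<and> finite R \<and> f \<in> Q \<and> finite I \<and>
     (\<forall>q S1 S2 p. Check q S1 S2 p \<in> I \<longrightarrow> q \<in> Q \<and> p \<in> Q \<and> S1 \<subseteq> R \<and> S2 \<subseteq> R) \<and>
     (\<forall>q p1 p2. Fork q p1 p2 \<in> I \<longrightarrow> q \<in> Q \<and> p1 \<in> Q \<and> p2 \<in> Q)"

inductive accepting :: "'a \<Rightarrow> 'a instr set \<Rightarrow> 'a \<Rightarrow> 'a set \<Rightarrow> bool"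
  for f :: 'a and I :: "'a instr set" where
  acc_final: "accepting f I f S"
| acc_check: "\<lbrakk>Check q S1 S2 p \<in> I; S1 \<subseteq> S; accepting f I p (S \<union> S2)\<rbrakk>
               \<Longrightarrow> accepting f I q S"
| acc_fork: "\<lbrakk>Fork q p1 p2 \<in> I; accepting f I p1 S; accepting f I p2 S\<rbrakk>
               \<Longrightarrow> accepting f I q S"

datatype 'a form = Var 'a | Imp "'a form" "'a form"

inductive nd :: "'a form set \<Rightarrow> 'a form \<Rightarrow> bool" (infix "\<turnstile>" 50) where
  nd_ax: "\<phi> \<in> \<Gamma> \<Longrightarrow> \<Gamma> \<turnstile> \<phi>"
| nd_impI: "insert \<phi> \<Gamma> \<turnstile> \<psi> \<Longrightarrow> \<Gamma> \<turnstile> Imp \<phi> \<psi>"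
| nd_impE: "\<lbrakk>\<Gamma> \<turnstile> Imp \<phi> \<psi>; \<Gamma> \<turnstile> \<phi>\<rbrakk> \<Longrightarrow> \<Gamma> \<turnstile> \<psi>"

fun order :: "'a form \<Rightarrow> nat" where
  "order (Var _) = 0"
| "order (Imp \<sigma> \<tau>) = max (order \<tau>) (order \<sigma> + 1)"

fun imps :: "'a form list \<Rightarrow> 'a form \<Rightarrow> 'a form" where
  "imps [] \<psi> = \<psi>"
| "imps (\<phi> # \<phi>s) \<psi> = Imp \<phi> (imps \<phi>s \<psi>)"

definition enum_set :: "'b set \<Rightarrow> 'b list" where
  "enum_set S = (SOME xs. distinct xs \<and> set xs = S)"

definition imp_set :: "'a form set \<Rightarrow> 'a form \<Rightarrow> 'a form" where
  "imp_set \<Gamma> \<psi> = imps (enum_set \<Gamma>) \<psi>"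

fun instr_formula :: "'a instr \<Rightarrow> 'a form" where
  "instr_formula (Check q S1 S2 p) =
     imps (map Var (enum_set S1)) (Imp (imps (map Var (enum_set S2)) (Var p)) (Var q))"
| "instr_formula (Fork q p1 p2) = Imp (Var p1) (Imp (Var p2) (Var q))"

definition automaton_context :: "'a \<Rightarrow> 'a instr set \<Rightarrow> 'a set \<Rightarrow> 'a form set" where
  "automaton_context f I S0 = Var ` (S0 \<union> {f}) \<union> instr_formula ` I"

end

theory Submission
  imports Defs
begin

text \<open>
  Completeness of the encoding is a direct simulation: a run of the automaton becomes a
  derivation, the premise of a check instruction being discharged by implication
  introduction over the newly set registers. For soundness one reads derivations in the
  Kripke model whose worlds are register sets ordered by inclusion, where a state holds at
  \<open>T\<close> iff it accepts from \<open>T\<close> and a register holds at \<open>T\<close> iff it lies in \<open>T\<close>.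
  Acceptance is monotone in the register set, so this is a Kripke model, and each
  instruction formula is forced in it precisely because the corresponding acceptance rule
  is closed. The orders are immediate: instruction formulas nest implications between
  atoms at most twice.
\<close>

lemma set_enum_set: "finite S \<Longrightarrow> set (enum_set S) = S"
  unfolding enum_set_def by (metis (mono_tags, lifting) finite_distinct_list someI_ex)

lemma nd_impsI: "set \<phi>s \<union> \<Gamma> \<turnstile> \<psi> \<Longrightarrow> \<Gamma> \<turnstile> imps \<phi>s \<psi>"
proof (induction \<phi>s arbitrary: \<Gamma>)
  case Nil
  then show ?case by simp
next
  case (Cons \<phi> \<phi>s)
  have "set \<phi>s \<union> insert \<phi> \<Gamma> = set (\<phi> # \<phi>s) \<union> \<Gamma>" by auto
  with Cons have "insert \<phi> \<Gamma> \<turnstile> imps \<phi>s \<psi>" by metis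
  then show ?case by (simp add: nd_impI)
qed

lemma nd_impsE: "\<Gamma> \<turnstile> imps \<phi>s \<psi> \<Longrightarrow> \<forall>\<phi>\<in>set \<phi>s. \<Gamma> \<turnstile> \<phi> \<Longrightarrow> \<Gamma> \<turnstile> \<psi>"
  by (induction \<phi>s) (auto intro: nd_impE)

fun forces :: "('w::order \<Rightarrow> 'a \<Rightarrow> bool) \<Rightarrow> 'w \<Rightarrow> 'a form \<Rightarrow> bool" where
  "forces V w (Var a) = V w a"
| "forces V w (Imp \<phi> \<psi>) = (\<forall>w'\<ge>w. forces V w' \<phi> \<longrightarrow> forces V w' \<psi>)"

lemma mono_valuationD: "mono V \<Longrightarrow> V w a \<Longrightarrow> w \<le> w' \<Longrightarrow> V w' a"
  by (metis le_boolD le_funD monoD)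

lemma forces_mono:
  assumes "mono V" and "forces V w \<phi>" and "w \<le> w'"
  shows "forces V w' \<phi>"
  using assms(2,3)
proof (induction \<phi> arbitrary: w w')
  case (Var a)
  then show ?case using mono_valuationD[OF \<open>mono V\<close>] by simp
next
  case (Imp \<phi> \<psi>)
  then show ?case by (auto intro: order_trans)
qed

lemma nd_sound:
  assumes "\<Gamma> \<turnstile> \<phi>" and "mono V" and "\<forall>\<gamma>\<in>\<Gamma>. forces V w \<gamma>"
  shows "forces V w \<phi>"
  using assms(1,3)
proof (induction arbitrary: w rule: nd.induct)
  case (nd_ax \<phi> \<Gamma>)
  then show ?case by blast
next
  case (nd_impI \<phi> \<Gamma> \<psi>)
  show ?case
  proof (simp only: forces.simps, intro allI impI)
    fix w' assume "w \<le> w'" and "forces V w' \<phi>"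
    with nd_impI.prems have "\<forall>\<gamma>\<in>insert \<phi> \<Gamma>. forces V w' \<gamma>"
      using forces_mono[OF \<open>mono V\<close>] by blast
    then show "forces V w' \<psi>" by (rule nd_impI.IH)
  qed
next
  case (nd_impE \<Gamma> \<phi> \<psi>)
  then show ?case by fastforce
qed

lemma forces_imps_Var:
  assumes "mono V"
  shows "forces V w (imps (map Var as) \<psi>) \<longleftrightarrow>
    (\<forall>w'\<ge>w. (\<forall>a\<in>set as. V w' a) \<longrightarrow> forces V w' \<psi>)"
proof (induction as arbitrary: w)
  case Nil
  then show ?case using forces_mono[OF assms] by auto
next
  case (Cons a as)
  show ?case
    using mono_valuationD[OF assms] by (auto simp: Cons.IH intro: order_trans)
qed

lemma accepting_mono: "accepting f I q S \<Longrightarrow> S \<subseteq> T \<Longrightarrow> accepting f I q T"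
proof (induction arbitrary: T rule: accepting.induct)
  case (acc_final S)
  show ?case by (rule accepting.acc_final)
next
  case (acc_check q S1 S2 p S)
  then have "S1 \<subseteq> T" and "accepting f I p (T \<union> S2)" by blast+
  then show ?case by (rule accepting.acc_check[OF acc_check.hyps(1)])
next
  case (acc_fork q p1 p2 S)
  then show ?case by (meson accepting.acc_fork)
qed

definition acceptance_val :: "'a set \<Rightarrow> 'a \<Rightarrow> 'a instr set \<Rightarrow> 'a set \<Rightarrow> 'a \<Rightarrow> bool" where
  "acceptance_val Q f I T a = (if a \<in> Q then accepting f I a T else a \<in> T)"

lemma mono_acceptance_val: "mono (acceptance_val Q f I)"
  by (auto intro!: monoI le_funI simp: acceptance_val_def accepting_mono)

lemma acceptance_val_state: "q \<in> Q \<Longrightarrow> acceptance_val Q f I T q \<longleftrightarrow> accepting f I q T"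
  by (simp add: acceptance_val_def)

lemma acceptance_val_registers:
  assumes "Q \<inter> R = {}" and "S \<subseteq> R" and "finite S"
  shows "(\<forall>a\<in>set (enum_set S). acceptance_val Q f I T a) \<longleftrightarrow> S \<subseteq> T"
  using assms by (auto simp: set_enum_set acceptance_val_def)

lemma forces_instr_formula:
  assumes M: "monotonic_automaton Q R f I" and QR: "Q \<inter> R = {}" and i: "i \<in> I"
  shows "forces (acceptance_val Q f I) T (instr_formula i)"
proof (cases i)
  case (Check q S1 S2 p)
  with M i have states: "q \<in> Q" "p \<in> Q" and regs: "S1 \<subseteq> R" "S2 \<subseteq> R" "finite R"
    unfolding monotonic_automaton_def by auto
  note registers = acceptance_val_registers[OF QR _ finite_subset[OF _ \<open>finite R\<close>]]
  show ?thesis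
    unfolding Check instr_formula.simps forces_imps_Var[OF mono_acceptance_val]
  proof (intro allI impI)
    fix T' assume "T \<le> T'" and "\<forall>a\<in>set (enum_set S1). acceptance_val Q f I T' a"
    then have "S1 \<subseteq> T'" using registers regs by blast
    show "forces (acceptance_val Q f I) T' (Imp (imps (map Var (enum_set S2)) (Var p)) (Var q))"
    proof (simp only: forces.simps, intro allI impI)
      fix T'' assume "T' \<le> T''"
        and "forces (acceptance_val Q f I) T'' (imps (map Var (enum_set S2)) (Var p))"
      \<comment> \<open>evaluate the premise at the world \<open>T'' \<union> S2\<close>, where all newly set registers hold\<close>
      then have "accepting f I p (T'' \<union> S2)"
        using registers[OF regs(2) regs(2)] states(2)
        by (auto simp: forces_imps_Var[OF mono_acceptance_val] acceptance_val_state)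
      moreover have "S1 \<subseteq> T''" using \<open>S1 \<subseteq> T'\<close> \<open>T' \<le> T''\<close> by blast
      ultimately show "acceptance_val Q f I T'' q"
        using states(1) i Check by (auto simp: acceptance_val_state intro: accepting.acc_check)
    qed
  qed
next
  case (Fork q p1 p2)
  with M i have "q \<in> Q" "p1 \<in> Q" "p2 \<in> Q"
    unfolding monotonic_automaton_def by auto
  with i Fork show ?thesis
    by (auto simp: acceptance_val_state intro: accepting.acc_fork accepting_mono)
qed

lemma accepting_imp_nd:
  assumes "accepting f I q S"
    and fin: "\<forall>q S1 S2 p. Check q S1 S2 p \<in> I \<longrightarrow> finite S1 \<and> finite S2"
    and "Var ` S \<subseteq> \<Gamma>" and "instr_formula ` I \<subseteq> \<Gamma>" and "Var f \<in> \<Gamma>"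
  shows "\<Gamma> \<turnstile> Var q"
  using assms(1,3-)
proof (induction arbitrary: \<Gamma> rule: accepting.induct)
  case (acc_final S)
  then show ?case by (simp add: nd_ax)
next
  case (acc_check q S1 S2 p S)
  have "finite S1" "finite S2" using fin acc_check.hyps(1) by blast+
  have "Var ` (S \<union> S2) \<subseteq> set (map Var (enum_set S2)) \<union> \<Gamma>"
    using acc_check.prems(1) set_enum_set[OF \<open>finite S2\<close>] by auto
  then have "set (map Var (enum_set S2)) \<union> \<Gamma> \<turnstile> Var p"
    using acc_check.prems(2,3) by (intro acc_check.IH) auto
  then have premise: "\<Gamma> \<turnstile> imps (map Var (enum_set S2)) (Var p)"
    by (rule nd_impsI)
  have "\<Gamma> \<turnstile> instr_formula (Check q S1 S2 p)"
    using acc_check.hyps(1) acc_check.prems(2) by (blast intro: nd_ax)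
  then have "\<Gamma> \<turnstile> imps (map Var (enum_set S1)) (Imp (imps (map Var (enum_set S2)) (Var p)) (Var q))"
    by simp
  moreover have "\<forall>\<phi>\<in>set (map Var (enum_set S1)). \<Gamma> \<turnstile> \<phi>"
    using acc_check.hyps(2) acc_check.prems(1) set_enum_set[OF \<open>finite S1\<close>]
    by (auto intro: nd_ax)
  ultimately have "\<Gamma> \<turnstile> Imp (imps (map Var (enum_set S2)) (Var p)) (Var q)"
    by (rule nd_impsE)
  then show ?case using premise by (rule nd_impE)
next
  case (acc_fork q p1 p2 S)
  have "\<Gamma> \<turnstile> Imp (Var p1) (Imp (Var p2) (Var q))"
    using acc_fork.hyps(1) acc_fork.prems(2) by (metis image_subset_iff instr_formula.simps(2) nd_ax)
  then show ?case using acc_fork.IH acc_fork.prems by (meson nd_impE)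
qed

lemma nd_imp_accepting:
  assumes M: "monotonic_automaton Q R f I" and QR: "Q \<inter> R = {}"
    and "q \<in> Q" and "S \<subseteq> R" and "automaton_context f I S \<turnstile> Var q"
  shows "accepting f I q S"
proof -
  have "f \<in> Q" using M by (simp add: monotonic_automaton_def)
  with QR \<open>S \<subseteq> R\<close> have "\<forall>\<gamma>\<in>Var ` (S \<union> {f}). forces (acceptance_val Q f I) S \<gamma>"
    by (auto simp: acceptance_val_def intro: accepting.acc_final)
  then have "\<forall>\<gamma>\<in>automaton_context f I S. forces (acceptance_val Q f I) S \<gamma>"
    using forces_instr_formula[OF M QR] by (auto simp: automaton_context_def)
  then have "forces (acceptance_val Q f I) S (Var q)"
    using nd_sound[OF \<open>automaton_context f I S \<turnstile> Var q\<close> mono_acceptance_val] by blast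
  then show ?thesis using \<open>q \<in> Q\<close> by (simp add: acceptance_val_state)
qed

lemma order_imps_le: "\<forall>\<phi>\<in>set \<phi>s. order \<phi> \<le> n \<Longrightarrow> order \<psi> \<le> Suc n \<Longrightarrow> order (imps \<phi>s \<psi>) \<le> Suc n"
  by (induction \<phi>s) auto

lemma order_imps_Var: "order (imps (map Var as) \<psi>) = max (order \<psi>) (if as = [] then 0 else 1)"
  by (induction as) auto

lemma order_instr_formula: "order (instr_formula i) \<le> 2"
  by (cases i) (simp_all add: order_imps_Var)

theorem lemma3p9:
  fixes Q R :: "'a set" and f q0 :: 'a and I :: "'a instr set" and S0 :: "'a set"
  assumes "monotonic_automaton Q R f I"
    and "Q \<inter> R = {}"
    and "q0 \<in> Q" and "S0 \<subseteq> R"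
  shows "(accepting f I q0 S0 \<longleftrightarrow> automaton_context f I S0 \<turnstile> Var q0)
       \<and> (\<forall>\<phi> \<in> automaton_context f I S0. order \<phi> \<le> 2)
       \<and> order (imp_set (automaton_context f I S0) (Var q0)) \<le> 3"
proof (intro conjI iffI)
  note M = assms(1)[unfolded monotonic_automaton_def]
  show "automaton_context f I S0 \<turnstile> Var q0" if "accepting f I q0 S0"
  proof (rule accepting_imp_nd[OF that])
    show "\<forall>q S1 S2 p. Check q S1 S2 p \<in> I \<longrightarrow> finite S1 \<and> finite S2"
      using M by (meson finite_subset)
  qed (auto simp: automaton_context_def)
  show "accepting f I q0 S0" if "automaton_context f I S0 \<turnstile> Var q0"
    using nd_imp_accepting[OF assms that] .
  show order_context: "\<forall>\<phi> \<in> automaton_context f I S0. order \<phi> \<le> 2"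
    by (auto simp: automaton_context_def order_instr_formula)
  have "finite (automaton_context f I S0)"
    using M assms(4) by (simp add: automaton_context_def finite_subset)
  then have "order (imps (enum_set (automaton_context f I S0)) (Var q0)) \<le> Suc 2"
    by (intro order_imps_le) (use order_context set_enum_set in auto)
  then show "order (imp_set (automaton_context f I S0) (Var q0)) \<le> 3"
    by (simp add: imp_set_def)
qed

end
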